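(* Let $a,b$ be coprime positive integers, $q=a/b$, and let $\mathbf m=(m_0,\dots,m_k)$ and $\mathbf n=(n_0,\dots,n_l)$ be paths for $q$ with $c(q,\mathbf m)=c(q,\mathbf n)$. Write $a\,c(q,\mathbf m_j)=u_j/v_j$ ($j=0,\dots,k-1$) and $a\,c(q,\mathbf n_j)=x_j/y_j$ ($j=0,\dots,l-1$) as reduced fractions, and let $N$ be a positive integer with $u_j\mid N$ for $j=0,\dots,k-1$ and $x_j\mid N$ for $j=0,\dots,l-1$. If $k\ne l$, then $w_{q'}$ is not unique for every $q'=a/b'$ with $b'$ a positive integer such that $b'\equiv\pm b\pmod N$ and $b'\ne\big(w_q(\mathbf m)/w_q(\mathbf n)\big)^{2/(k-l)}b$. If $k=l$ and $w_q(\mathbf m)\ne w_q(\mathbf n)$, then $w_{q'}$ is not unique for every $q'=a/b'$ with $b'$ a positive integer such that $b'\equiv\pm b\pmod N$.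
   Context: For $q>0$, $k\ge0$ and $\mathbf m=(m_0,\dots,m_k)\in\mathbb Z^{k+1}$ put $\mathbf m_j=(m_0,\dots,m_j)$; define $c(q,\mathbf m_0)=m_0$ and $c(q,\mathbf m_j)=m_j+\frac{1}{q\,c(q,\mathbf m_{j-1})}$ for $1\le j\le k$. $\mathbf m$ is a path for $q$ of length $k$ if $c(q,\mathbf m_j)\ne0$ for $0\le j\le k-1$. The weight is $w_q(\mathbf m)=q^{k/2}\prod_{j=0}^{k-1}|c(q,\mathbf m_j)|$ (and $1$ if $k=0$). The weight $w_q$ is unique if $w_q(\mathbf m)=w_q(\mathbf n)$ for all paths $\mathbf m,\mathbf n$ for $q$ with $c(q,\mathbf m)=c(q,\mathbf n)$. *)

theory Defs
  imports Complex_Main "HOL-Number_Theory.Cong"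
begin

text \<open>A path (m_0,...,m_k) is represented by the nonempty integer list [m_0,...,m_k];
  its length k is (length m - 1). The prefix m_j is take (Suc j) m.\<close>

definition cval :: "real \<Rightarrow> int list \<Rightarrow> real" where
  "cval q ms = foldl (\<lambda>c m. real_of_int m + 1 / (q * c)) (real_of_int (hd ms)) (tl ms)"

definition plen :: "int list \<Rightarrow> nat" where
  "plen ms = length ms - 1"

definition is_path :: "real \<Rightarrow> int list \<Rightarrow> bool" where
  "is_path q ms \<longleftrightarrow> ms \<noteq> [] \<and> (\<forall>j < plen ms. cval q (take (Suc j) ms) \<noteq> 0)"

definition weight :: "real \<Rightarrow> int list \<Rightarrow> real" where
  "weight q ms = q powr (real (plen ms) / 2) * (\<Prod>j<plen ms. \<bar>cval q (take (Suc j) ms)\<bar>)"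

definition weight_unique :: "real \<Rightarrow> bool" where
  "weight_unique q \<longleftrightarrow> (\<forall>ms ns. is_path q ms \<and> is_path q ns \<and> cval q ms = cval q ns
      \<longrightarrow> weight q ms = weight q ns)"

definition reduced_num_dvd :: "real \<Rightarrow> int \<Rightarrow> bool" where
  "reduced_num_dvd r N \<longleftrightarrow> (\<exists>u v. v > 0 \<and> coprime u v \<and> r = real_of_int u / real_of_int v \<and> u dvd N)"

end

theory Submission
  imports Defs
begin

text \<open>
  Let b' = e b + t N with e = +-1, and q' = a/b'. A path m for q = a/b lifts to a path m' for q'
  of the same length with c(q',m'_j) = s e^j c(q,m_j) for any fixed sign s: writing
  a c(q,m_j) = u/v with N = u K, the term 1/(q' c(q',m'_j)) differs from s e^(j+1)/(q c(q,m_j))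
  by the integer s e^j t K v, which is absorbed into the next entry m'_(j+1).
  The lift keeps every |c|, so w_q'(m') = q'^(k/2) P(m) with P(m) the product of the |c(q,m_j)|.
  Choosing the signs of the lifts of m and n so that c(q',m') = c(q',n'), uniqueness of w_q'
  gives q'^(k/2) P(m) = q'^(l/2) P(n), hence w_q(m)/w_q(n) = (q/q')^((k-l)/2) = (b'/b)^((k-l)/2),
  which both alternatives of the theorem exclude.
\<close>

lemma cval_singleton [simp]: "cval q [m] = m"
  by (simp add: cval_def)

lemma cval_snoc: "ms \<noteq> [] \<Longrightarrow> cval q (ms @ [m]) = m + 1 / (q * cval q ms)"
  by (cases ms) (simp_all add: cval_def)

lemma is_path_snoc:
  assumes "ms \<noteq> []"
  shows "is_path q (ms @ [m]) \<longleftrightarrow> is_path q ms \<and> cval q ms \<noteq> 0"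
proof -
  have "(\<forall>j < length ms. cval q (take (Suc j) ms) \<noteq> 0) \<longleftrightarrow>
        (\<forall>j < length ms - 1. cval q (take (Suc j) ms) \<noteq> 0) \<and>
        cval q ms \<noteq> 0"
  proof -
    obtain n where "length ms = Suc n"
      using assms by (cases ms) auto
    then show ?thesis
      by (auto simp: less_Suc_eq)
  qed
  then show ?thesis
    using assms by (simp add: is_path_def plen_def)
qed

definition path_prod :: "real \<Rightarrow> int list \<Rightarrow> real" where
  "path_prod q ms = (\<Prod>j<plen ms. \<bar>cval q (take (Suc j) ms)\<bar>)"

lemma weight_eq_path_prod: "weight q ms = q powr (plen ms / 2) * path_prod q ms"
  by (simp add: weight_def path_prod_def)

lemma path_prod_pos: "is_path q ms \<Longrightarrow> path_prod q ms > 0"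
  unfolding is_path_def path_prod_def by (intro prod_pos) auto

lemma cval_lift_step:
  fixes a b b' e s t u v K m :: int and c :: real
  assumes "a \<noteq> 0" "b \<noteq> 0" "b' \<noteq> 0" "u \<noteq> 0" "v \<noteq> 0"
    and "\<bar>e\<bar> = 1" "\<bar>s\<bar> = 1" "b' = e * b + t * (u * K)" "a * c = u / v"
  shows "real_of_int (s * e ^ Suc j * m - s * e ^ j * t * K * v) + 1 / (a / b' * (s * e ^ j * c))
     = s * e ^ Suc j * (m + 1 / (a / b * c))"
proof -
  have c: "c = u / (a * v)"
    using assms(1,5,9) by (simp add: field_simps)
  have "\<bar>e ^ j\<bar> = 1"
    using assms(6) by (simp add: power_abs)
  then have "e ^ j = 1 \<or> e ^ j = -1" "e = 1 \<or> e = -1" "s = 1 \<or> s = -1"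
    using assms(6,7) by arith+
  then show ?thesis
    using assms(1-5) unfolding c assms(8) by (auto simp: field_simps)
qed

lemma path_lift_prefixes:
  fixes a b b' e s t N :: int
  assumes "a > 0" "b > 0" "b' > 0" "\<bar>e\<bar> = 1" "\<bar>s\<bar> = 1"
    and b': "b' = e * b + t * N"
  shows "is_path (a / b) ms \<Longrightarrow>
    \<forall>j < plen ms. reduced_num_dvd (a * cval (a / b) (take (Suc j) ms)) N \<Longrightarrow>
    \<exists>ms'. length ms' = length ms \<and>
      (\<forall>j < length ms.
        cval (a / b') (take (Suc j) ms') = s * e ^ j * cval (a / b) (take (Suc j) ms))"
proof (induction ms rule: rev_induct)
  case Nil
  then show ?case
    by (simp add: is_path_def)
next
  case (snoc m ms)
  show ?case
  proof (cases "ms = []")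
    case True
    then show ?thesis
      by (intro exI[of _ "[s * m]"]) simp
  next
    case False
    obtain p where p: "length ms = Suc p"
      using False by (cases ms) auto
    have prefix: "take (Suc j) (ms @ [m]) = take (Suc j) ms" if "j < length ms" for j
      using that by simp
    have path: "is_path (a / b) ms" and c_nz: "cval (a / b) ms \<noteq> 0"
      using snoc.prems(1) is_path_snoc[OF False] by auto
    have "\<forall>j < plen ms. reduced_num_dvd (a * cval (a / b) (take (Suc j) ms)) N"
      using snoc.prems(2) prefix by (simp add: plen_def p)
    then obtain ms' where ms': "length ms' = length ms"
      "\<forall>j < length ms.
        cval (a / b') (take (Suc j) ms') = s * e ^ j * cval (a / b) (take (Suc j) ms)"
      using snoc.IH path by blast
    have "reduced_num_dvd (a * cval (a / b) ms) N"
      using snoc.prems(2) prefix[of p] by (auto simp: plen_def p dest: spec[of _ p])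
    then obtain u v :: int where uv: "v > 0" "a * cval (a / b) ms = u / v" "u dvd N"
      unfolding reduced_num_dvd_def by blast
    have "u \<noteq> 0"
      using uv(2) c_nz \<open>a > 0\<close> by auto
    obtain K where K: "N = u * K"
      using uv(3) by blast
    have cval_ms': "cval (a / b') ms' = s * e ^ p * cval (a / b) ms"
      using ms' p by (metis lessI take_all_iff order_refl)
    define m' where "m' = s * e ^ Suc p * m - s * e ^ p * t * K * v"
    have "cval (a / b') (ms' @ [m']) = m' + 1 / (a / b' * (s * e ^ p * cval (a / b) ms))"
      using cval_snoc[of ms' "a / b'" m'] ms'(1) p
      by (simp add: cval_ms' flip: length_greater_0_conv)
    also have "\<dots> = s * e ^ Suc p * (m + 1 / (a / b * cval (a / b) ms))"
      unfolding m'_def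
      using \<open>a > 0\<close> \<open>b > 0\<close> \<open>b' > 0\<close> \<open>u \<noteq> 0\<close> uv(1) assms(4,5) b' K
      by (intro cval_lift_step[OF _ _ _ _ _ _ _ _ uv(2)]) auto
    also have "\<dots> = s * e ^ Suc p * cval (a / b) (ms @ [m])"
      using False by (simp add: cval_snoc)
    finally have step: "cval (a / b') (ms' @ [m']) = s * e ^ Suc p * cval (a / b) (ms @ [m])" .
    show ?thesis
    proof (intro exI[of _ "ms' @ [m']"] conjI allI impI)
      fix j
      assume "j < length (ms @ [m])"
      then consider "j < length ms" | "j = Suc p"
        using p by fastforce
      then show "cval (a / b') (take (Suc j) (ms' @ [m']))
          = s * e ^ j * cval (a / b) (take (Suc j) (ms @ [m]))"
        by cases (use ms' step p in simp_all)
    qed (use ms' in simp)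
  qed
qed

lemma path_lift:
  fixes a b b' e s t N :: int
  assumes "a > 0" "b > 0" "b' > 0" "\<bar>e\<bar> = 1" "\<bar>s\<bar> = 1" "b' = e * b + t * N"
    and path: "is_path (a / b) ms"
    and "\<forall>j < plen ms. reduced_num_dvd (a * cval (a / b) (take (Suc j) ms)) N"
  obtains ms' where "is_path (a / b') ms'" "plen ms' = plen ms"
    "cval (a / b') ms' = s * e ^ plen ms * cval (a / b) ms"
    "path_prod (a / b') ms' = path_prod (a / b) ms"
proof -
  obtain ms' where len: "length ms' = length ms" and ms':
    "\<forall>j < length ms.
      cval (a / b') (take (Suc j) ms') = s * e ^ j * cval (a / b) (take (Suc j) ms)"
    using path_lift_prefixes[OF assms] by blast
  have unit: "\<bar>real_of_int (s * e ^ j)\<bar> = 1" for j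
  proof -
    have "\<bar>s * e ^ j\<bar> = 1"
      using assms(4,5) by (simp add: abs_mult power_abs)
    then show ?thesis
      by (metis of_int_1 of_int_abs)
  qed
  have "ms \<noteq> []"
    using path by (simp add: is_path_def)
  then have "ms' \<noteq> []"
    and whole: "take (Suc (plen ms)) ms = ms" "take (Suc (plen ms)) ms' = ms'"
    using len by (auto simp: plen_def)
  have "cval (a / b') (take (Suc j) ms') \<noteq> 0" if "j < plen ms" for j
  proof -
    have "cval (a / b) (take (Suc j) ms) \<noteq> 0" and "j < length ms"
      using that path by (auto simp: is_path_def plen_def)
    then show ?thesis
      using ms' unit[of j] by (metis abs_zero mult_eq_0_iff zero_neq_one)
  qed
  then have "is_path (a / b') ms'"
    using \<open>ms' \<noteq> []\<close> len by (simp add: is_path_def plen_def)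
  moreover have "cval (a / b') ms' = s * e ^ plen ms * cval (a / b) ms"
    using ms'[rule_format, of "plen ms"] whole \<open>ms \<noteq> []\<close> by (simp add: plen_def)
  moreover have "path_prod (a / b') ms' = path_prod (a / b) ms"
    unfolding path_prod_def plen_def len
    by (intro prod.cong refl) (use ms' unit in \<open>simp add: abs_mult\<close>)
  ultimately show thesis
    using that len by (simp add: plen_def)
qed

lemma powr_ratio_rescale:
  fixes Q Q' P P' x y :: real
  assumes "Q > 0" "Q' > 0" "P' \<noteq> 0" "Q' powr x * P = Q' powr y * P'"
  shows "(Q powr x * P) / (Q powr y * P') = (Q / Q') powr (x - y)"
proof -
  have "P = Q' powr (y - x) * P'"
    using assms(2,4) by (simp add: powr_diff field_simps)
  then show ?thesis
    using assms(1-3) by (simp add: powr_diff powr_divide field_simps)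
qed

lemma weight_ratio_if_weight_unique:
  fixes a b b' N :: int
  assumes "a > 0" "b > 0" "b' > 0" "[b' = b] (mod N) \<or> [b' = - b] (mod N)"
    and paths: "is_path (a / b) ms" "is_path (a / b) ns" "cval (a / b) ms = cval (a / b) ns"
    and "\<forall>j < plen ms. reduced_num_dvd (a * cval (a / b) (take (Suc j) ms)) N"
    and "\<forall>j < plen ns. reduced_num_dvd (a * cval (a / b) (take (Suc j) ns)) N"
    and "weight_unique (a / b')"
  shows "weight (a / b) ms / weight (a / b) ns
    = (b' / b) powr ((real (plen ms) - real (plen ns)) / 2)"
proof -
  obtain e :: int where e: "\<bar>e\<bar> = 1" and "[e * b = b'] (mod N)"
  proof (cases "[b' = b] (mod N)")
    case True
    then show thesis
      using that[of 1] by (simp add: cong_sym_eq)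
  next
    case False
    then show thesis
      using that[of "- 1"] assms(4) by (simp add: cong_sym_eq)
  qed
  then obtain t where b': "b' = e * b + t * N"
    unfolding cong_iff_lin by (auto simp: mult.commute)
  define k l where "k = plen ms" and "l = plen ns"
  have "\<bar>e ^ (k + l)\<bar> = 1" "\<bar>e ^ l\<bar> = 1"
    using e by (simp_all add: power_abs)
  obtain ms' where ms': "is_path (a / b') ms'" "plen ms' = k"
      "cval (a / b') ms' = e ^ k * cval (a / b) ms" "path_prod (a / b') ms' = path_prod (a / b) ms"
    using path_lift[of a b b' e 1, OF assms(1-3) e _ b' paths(1) assms(8)] k_def by auto
  obtain ns' where ns': "is_path (a / b') ns'" "plen ns' = l"
      "cval (a / b') ns' = e ^ (k + l) * e ^ l * cval (a / b) ns"
      "path_prod (a / b') ns' = path_prod (a / b) ns"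
    using path_lift[OF assms(1-3) e \<open>\<bar>e ^ (k + l)\<bar> = 1\<close> b' paths(2) assms(9)] l_def
    by auto
  have "e ^ (k + l) * e ^ l = e ^ k * (e ^ l) ^ 2"
    by (simp add: power_add power2_eq_square)
  also have "(e ^ l) ^ 2 = 1"
    using \<open>\<bar>e ^ l\<bar> = 1\<close> by (metis power2_abs power_one)
  finally have "cval (a / b') ms' = cval (a / b') ns'"
    using ms'(3) ns'(3) paths(3) by simp
  then have "weight (a / b') ms' = weight (a / b') ns'"
    using assms(10) ms'(1) ns'(1) unfolding weight_unique_def by blast
  then have "(a / b') powr (k / 2) * path_prod (a / b) ms
      = (a / b') powr (l / 2) * path_prod (a / b) ns"
    using ms' ns' by (simp add: weight_eq_path_prod)
  then have "weight (a / b) ms / weight (a / b) ns = ((a / b) / (a / b')) powr (k / 2 - l / 2)"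
    unfolding weight_eq_path_prod k_def l_def
    using path_prod_pos[OF paths(2)] assms(1-3)
    by (intro powr_ratio_rescale) (auto simp: k_def l_def)
  also have "(a / b) / (a / b') = b' / b"
    using assms(1) by simp
  finally show ?thesis
    by (simp add: k_def l_def diff_divide_distrib)
qed

theorem corollary6:
  fixes a b N :: int and ms ns :: "int list"
  assumes "a > 0" "b > 0" "coprime a b"
    and "is_path (a / b) ms" "is_path (a / b) ns"
    and "cval (a / b) ms = cval (a / b) ns"
    and "N > 0"
    and "\<forall>j < plen ms. reduced_num_dvd (a * cval (a / b) (take (Suc j) ms)) N"
    and "\<forall>j < plen ns. reduced_num_dvd (a * cval (a / b) (take (Suc j) ns)) N"
  shows "(plen ms \<noteq> plen ns \<longrightarrow>
           (\<forall>b' :: int. b' > 0 \<and> ([b' = b] (mod N) \<or> [b' = - b] (mod N))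
              \<and> real_of_int b' \<noteq> (weight (a / b) ms / weight (a / b) ns)
                    powr (2 / (real (plen ms) - real (plen ns))) * b
              \<longrightarrow> \<not> weight_unique (a / b')))
       \<and> (plen ms = plen ns \<and> weight (a / b) ms \<noteq> weight (a / b) ns \<longrightarrow>
           (\<forall>b' :: int. b' > 0 \<and> ([b' = b] (mod N) \<or> [b' = - b] (mod N))
              \<longrightarrow> \<not> weight_unique (a / b')))"
proof -
  have ratio: "weight (a / b) ms / weight (a / b) ns
      = (b' / b) powr ((real (plen ms) - real (plen ns)) / 2)"
    if "b' > 0" "[b' = b] (mod N) \<or> [b' = - b] (mod N)" "weight_unique (a / b')" for b' :: int
    using weight_ratio_if_weight_unique that assms(1,2,4-6,8,9) by blast
  show ?thesis
  proof (intro conjI impI allI notI; elim conjE)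
    fix b' :: int
    define d where "d = real (plen ms) - real (plen ns)"
    assume "plen ms \<noteq> plen ns" "b' > 0" "[b' = b] (mod N) \<or> [b' = - b] (mod N)"
      and b'_ne: "real_of_int b' \<noteq> (weight (a / b) ms / weight (a / b) ns)
                    powr (2 / (real (plen ms) - real (plen ns))) * b"
      and "weight_unique (a / b')"
    then have "(weight (a / b) ms / weight (a / b) ns) powr (2 / d)
        = (b' / b) powr (d / 2 * (2 / d))"
      using ratio by (simp add: d_def powr_powr)
    also have "d / 2 * (2 / d) = 1"
      using \<open>plen ms \<noteq> plen ns\<close> by (simp add: d_def)
    also have "(b' / b) powr 1 = b' / b"
      using \<open>b' > 0\<close> \<open>b > 0\<close> by simp
    finally show False
      using b'_ne \<open>b > 0\<close> by (simp add: d_def)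
  next
    fix b' :: int
    assume "plen ms = plen ns" "weight (a / b) ms \<noteq> weight (a / b) ns"
      and "b' > 0" "[b' = b] (mod N) \<or> [b' = - b] (mod N)" "weight_unique (a / b')"
    then show False
      using ratio \<open>b > 0\<close> by simp
  qed
qed

end
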